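(* Let $S$ be an entropy function for a finite set $X$. Given a function $\mu:2^X\to[0,\infty)$, there exist subsets $A_1\subset\cdots\subset A_m$ of $X$ and a function $\mu':2^X\to[0,\infty)$ supported on $\{A_1,\dots,A_m\}$ such that $\phi_{\mu'}=\phi_\mu$ and \[\sum_{i=1}^m\mu'(A_i)S(A_i)\le\sum_{A\subseteq X}\mu(A)S(A).\]
   Context: An entropy function for a finite set $X$ is a function $S:2^X\to[0,\infty)$ with $S(\emptyset)=0$, $S(A)+S(B)\ge S(A\cap B)+S(A\cup B)$ and $S(A)+S(B)\ge S(A\setminus B)+S(B\setminus A)$ for all $A,B\subseteq X$. For $\mu:2^X\to\mathbb R$, $\phi_\mu:X\to\mathbb R$ is defined by $\phi_\mu(x):=\sum_{A\ni x}\mu(A)$. *)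

theory Defs
  imports Complex_Main
begin

definition entropy_function :: "'a set \<Rightarrow> ('a set \<Rightarrow> real) \<Rightarrow> bool" where
  "entropy_function X S \<longleftrightarrow>
     (\<forall>A\<in>Pow X. S A \<ge> 0) \<and> S {} = 0 \<and>
     (\<forall>A\<in>Pow X. \<forall>B\<in>Pow X. S A + S B \<ge> S (A \<inter> B) + S (A \<union> B)) \<and>
     (\<forall>A\<in>Pow X. \<forall>B\<in>Pow X. S A + S B \<ge> S (A - B) + S (B - A))"

definition phi :: "'a set \<Rightarrow> ('a set \<Rightarrow> real) \<Rightarrow> 'a \<Rightarrow> real" where
  "phi X \<mu> x = (\<Sum>A\<in>{A. A \<subseteq> X \<and> x \<in> A}. \<mu> A)"

end

theory Submission
  imports Defs
begin

text \<open>Enumerate \<open>X\<close> as \<open>x\<^sub>0, ..., x\<^sub>n\<^sub>-\<^sub>1\<close> so that \<open>f = phi \<mu>\<close> decreases, and let \<open>P\<^sub>k\<close> be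
the set of the first \<open>k\<close> elements.  Giving \<open>P\<^sub>i\<^sub>+\<^sub>1\<close> the weight \<open>f x\<^sub>i - f x\<^sub>i\<^sub>+\<^sub>1\<close> (where
\<open>f x\<^sub>n = 0\<close>) yields a nonnegative \<open>\<mu>'\<close> on a chain with \<open>phi \<mu>' = f\<close>.  Summation by parts
turns its cost into \<open>\<Sum>\<^sub>i f x\<^sub>i (S P\<^sub>i\<^sub>+\<^sub>1 - S P\<^sub>i) = \<Sum>\<^sub>A \<mu> A \<Sum>\<^bsub>x\<^sub>i \<in> A\<^esub> (S P\<^sub>i\<^sub>+\<^sub>1 - S P\<^sub>i)\<close>,
and by submodularity the marginal gains of the elements of \<open>A\<close> along the chain add up to at most
\<open>S A\<close>.\<close>

definition submodular_on :: "'a set \<Rightarrow> ('a set \<Rightarrow> real) \<Rightarrow> bool" where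
  "submodular_on X S \<longleftrightarrow> (\<forall>A B. A \<subseteq> X \<longrightarrow> B \<subseteq> X \<longrightarrow> S (A \<inter> B) + S (A \<union> B) \<le> S A + S B)"

definition marginal_gain :: "('a set \<Rightarrow> real) \<Rightarrow> 'a list \<Rightarrow> nat \<Rightarrow> real" where
  "marginal_gain S xs i = S (set (take (Suc i) xs)) - S (set (take i xs))"

definition prefix_chain :: "'a list \<Rightarrow> 'a set list" where
  "prefix_chain xs = map (\<lambda>i. set (take (Suc i) xs)) [0..<length xs]"

definition chain_weight :: "'a list \<Rightarrow> (nat \<Rightarrow> real) \<Rightarrow> 'a set \<Rightarrow> real" where
  "chain_weight xs w A = (\<Sum>i<length xs. if A = set (take (Suc i) xs) then w i else 0)"

lemma entropy_function_submodular_on: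
  "entropy_function X S \<Longrightarrow> submodular_on X S"
  unfolding entropy_function_def submodular_on_def by auto

lemma submodular_onD:
  "submodular_on X S \<Longrightarrow> A \<subseteq> X \<Longrightarrow> B \<subseteq> X \<Longrightarrow> S (A \<inter> B) + S (A \<union> B) \<le> S A + S B"
  unfolding submodular_on_def by blast

lemma phi_eq_sum_Pow:
  assumes "finite X"
  shows "phi X \<mu> x = (\<Sum>A\<in>Pow X. if x \<in> A then \<mu> A else 0)"
proof -
  have "{A. A \<subseteq> X \<and> x \<in> A} = {A \<in> Pow X. x \<in> A}" by auto
  then show ?thesis
    unfolding phi_def using assms by (simp add: sum.inter_filter[symmetric])
qed

lemma phi_nonneg:
  assumes "finite X" "\<forall>A\<in>Pow X. \<mu> A \<ge> 0"
  shows "phi X \<mu> x \<ge> 0"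
  unfolding phi_eq_sum_Pow[OF assms(1)] using assms(2) by (intro sum_nonneg) auto

lemma sum_lessThan_by_parts:
  fixes F G :: "nat \<Rightarrow> 'a::comm_ring"
  shows "(\<Sum>i<n. (F i - F (Suc i)) * G (Suc i)) =
         (\<Sum>i<n. F i * (G (Suc i) - G i)) + F 0 * G 0 - F n * G n"
  by (induction n) (auto simp: algebra_simps)

lemma finite_antitone_enumeration:
  fixes f :: "'a \<Rightarrow> real"
  assumes "finite X"
  obtains xs where "distinct xs" "set xs = X" "sorted_wrt (\<lambda>x y. f y \<le> f x) xs"
proof -
  obtain ys where "distinct ys" "set ys = X"
    using finite_distinct_list[OF assms] by blast
  moreover have "sorted_wrt (\<lambda>x y. f y \<le> f x) (sort_key (\<lambda>x. - f x) ys)"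
    using sorted_sort_key[of "\<lambda>x. - f x" ys] by (simp add: sorted_map)
  ultimately show thesis
    by (intro that[of "sort_key (\<lambda>x. - f x) ys"]) auto
qed

lemma nth_mem_set_take_iff:
  assumes "distinct xs" "j < length xs"
  shows "xs ! j \<in> set (take k xs) \<longleftrightarrow> j < k"
  using assms by (auto simp: in_set_conv_nth nth_eq_iff_index_eq)

lemma submodular_on_marginal_gain_sum_le:
  assumes "submodular_on X S" "S {} = 0" "set xs \<subseteq> X" "A \<subseteq> X"
  shows "(\<Sum>i<length xs. if xs ! i \<in> A then marginal_gain S xs i else 0) \<le> S (A \<inter> set xs)"
  using assms(3)
proof (induction xs rule: rev_induct)
  case Nil
  then show ?case using assms(2) by simp
next
  case (snoc x xs)
  have "(\<Sum>i<length xs. if xs ! i \<in> A then marginal_gain S (xs @ [x]) i else 0) =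
        (\<Sum>i<length xs. if xs ! i \<in> A then marginal_gain S xs i else 0)"
    by (intro sum.cong) (simp_all add: marginal_gain_def)
  then have IH: "(\<Sum>i<length xs. if xs ! i \<in> A then marginal_gain S (xs @ [x]) i else 0)
            \<le> S (A \<inter> set xs)"
    using snoc by simp
  show ?case
  proof (cases "x \<in> A")
    case False
    then show ?thesis using IH by (simp add: nth_append)
  next
    case True
    have "S ((A \<inter> insert x (set xs)) \<inter> set xs) + S ((A \<inter> insert x (set xs)) \<union> set xs)
          \<le> S (A \<inter> insert x (set xs)) + S (set xs)"
      by (rule submodular_onD[OF assms(1)]) (use assms(4) snoc.prems in auto)
    moreover have "(A \<inter> insert x (set xs)) \<inter> set xs = A \<inter> set xs"
      and "(A \<inter> insert x (set xs)) \<union> set xs = insert x (set xs)"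
      using True by auto
    ultimately show ?thesis
      using IH True by (simp add: nth_append marginal_gain_def)
  qed
qed

lemma submodular_on_sum_phi_marginal_gain_le:
  assumes "finite X" "submodular_on X S" "S {} = 0" "set xs = X" "\<forall>A\<in>Pow X. \<mu> A \<ge> 0"
  shows "(\<Sum>i<length xs. phi X \<mu> (xs ! i) * marginal_gain S xs i) \<le> (\<Sum>A\<in>Pow X. \<mu> A * S A)"
proof -
  have "(\<Sum>i<length xs. phi X \<mu> (xs ! i) * marginal_gain S xs i) =
        (\<Sum>i<length xs. \<Sum>A\<in>Pow X. \<mu> A * (if xs ! i \<in> A then marginal_gain S xs i else 0))"
    unfolding phi_eq_sum_Pow[OF assms(1)] sum_distrib_right by (intro sum.cong) auto
  also have "\<dots> =
      (\<Sum>A\<in>Pow X. \<mu> A * (\<Sum>i<length xs. if xs ! i \<in> A then marginal_gain S xs i else 0))"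
    unfolding sum_distrib_left by (rule sum.swap)
  also have "\<dots> \<le> (\<Sum>A\<in>Pow X. \<mu> A * S A)"
  proof (rule sum_mono)
    fix A assume "A \<in> Pow X"
    then have "(\<Sum>i<length xs. if xs ! i \<in> A then marginal_gain S xs i else 0) \<le> S A"
      using submodular_on_marginal_gain_sum_le[OF assms(2,3), of xs A] assms(4)
      by (simp add: Int_absorb2)
    with \<open>A \<in> Pow X\<close> assms(5)
    show "\<mu> A * (\<Sum>i<length xs. if xs ! i \<in> A then marginal_gain S xs i else 0) \<le> \<mu> A * S A"
      by (simp add: mult_left_mono)
  qed
  finally show ?thesis .
qed

lemma length_prefix_chain [simp]: "length (prefix_chain xs) = length xs"
  unfolding prefix_chain_def by simp

lemma nth_prefix_chain [simp]: "i < length xs \<Longrightarrow> prefix_chain xs ! i = set (take (Suc i) xs)"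
  unfolding prefix_chain_def by simp

lemma prefix_chain_subset: "A \<in> set (prefix_chain xs) \<Longrightarrow> A \<subseteq> set xs"
  unfolding prefix_chain_def by (auto dest: in_set_takeD)

lemma sorted_wrt_psubset_prefix_chain:
  assumes "distinct xs"
  shows "sorted_wrt (\<subset>) (prefix_chain xs)"
  unfolding sorted_wrt_iff_nth_less length_prefix_chain
proof (intro allI impI)
  fix i j assume "i < j" "j < length xs"
  then have "set (take (Suc i) xs) \<subseteq> set (take (Suc j) xs)"
    by (simp add: set_take_subset_set_take)
  moreover have "xs ! j \<in> set (take (Suc j) xs) - set (take (Suc i) xs)"
    using nth_mem_set_take_iff[OF assms \<open>j < length xs\<close>] \<open>i < j\<close> by auto
  ultimately show "prefix_chain xs ! i \<subset> prefix_chain xs ! j"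
    using \<open>i < j\<close> \<open>j < length xs\<close> by auto
qed

lemma chain_weight_set_take:
  assumes "distinct xs" "i < length xs"
  shows "chain_weight xs w (set (take (Suc i) xs)) = w i"
proof -
  have card: "card (set (take (Suc j) xs)) = Suc j" if "j < length xs" for j
    using assms(1) that by (simp add: distinct_card)
  have "set (take (Suc i) xs) = set (take (Suc j) xs) \<longleftrightarrow> j = i" if "j < length xs" for j
    using card[OF that] card[OF assms(2)] by auto
  then show ?thesis
    using assms(2) unfolding chain_weight_def by (simp add: sum.delta' cong: if_cong)
qed

lemma chain_weight_eq_0: "A \<notin> set (prefix_chain xs) \<Longrightarrow> chain_weight xs w A = 0"
  unfolding chain_weight_def prefix_chain_def by (auto intro!: sum.neutral)

lemma chain_weight_nonneg: "(\<And>i. w i \<ge> 0) \<Longrightarrow> chain_weight xs w A \<ge> 0"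
  unfolding chain_weight_def by (auto intro: sum_nonneg)

lemma phi_chain_weight:
  assumes "finite X" "set xs \<subseteq> X" "distinct xs" "j < length xs"
  shows "phi X (chain_weight xs w) (xs ! j) = (\<Sum>i = j..<length xs. w i)"
proof -
  have "phi X (chain_weight xs w) (xs ! j) =
        (\<Sum>i<length xs. \<Sum>A\<in>{A. A \<subseteq> X \<and> xs ! j \<in> A}.
           if A = set (take (Suc i) xs) then w i else 0)"
    unfolding phi_def chain_weight_def by (rule sum.swap)
  also have "\<dots> = (\<Sum>i<length xs. if xs ! j \<in> set (take (Suc i) xs) then w i else 0)"
  proof (intro sum.cong refl)
    fix i
    have "finite {A. A \<subseteq> X \<and> xs ! j \<in> A}"
      using assms(1) by simp
    moreover have "set (take (Suc i) xs) \<subseteq> X"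
      using set_take_subset assms(2) by (rule order_trans)
    ultimately show
      "(\<Sum>A\<in>{A. A \<subseteq> X \<and> xs ! j \<in> A}. if A = set (take (Suc i) xs) then w i else 0) =
       (if xs ! j \<in> set (take (Suc i) xs) then w i else 0)"
      by (simp add: sum.delta')
  qed
  also have "\<dots> = (\<Sum>i = j..<length xs. w i)"
    by (intro sum.mono_neutral_cong_right)
      (auto simp: nth_mem_set_take_iff[OF assms(3,4)] less_Suc_eq_le)
  finally show ?thesis .
qed

lemma phi_chain_weight_telescope:
  assumes "finite X" "set xs \<subseteq> X" "distinct xs" "j < length xs" "F (length xs) = 0"
  shows "phi X (chain_weight xs (\<lambda>i. F i - F (Suc i))) (xs ! j) = F j"
proof -
  have "(\<Sum>i = j..<length xs. F i - F (Suc i)) = - (\<Sum>i = j..<length xs. F (Suc i) - F i)"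
    by (simp add: sum_negf[symmetric])
  also have "\<dots> = F j"
    using sum_Suc_diff'[of j "length xs" F] assms(4,5) by simp
  finally show ?thesis
    using phi_chain_weight[OF assms(1-4)] by simp
qed

lemma sum_chain_weight_telescope:
  assumes "distinct xs" "S {} = 0" "F (length xs) = 0"
  shows "(\<Sum>i<length xs.
            chain_weight xs (\<lambda>i. F i - F (Suc i)) (prefix_chain xs ! i) * S (prefix_chain xs ! i))
         = (\<Sum>i<length xs. F i * marginal_gain S xs i)"
proof -
  have "(\<Sum>i<length xs.
          chain_weight xs (\<lambda>i. F i - F (Suc i)) (prefix_chain xs ! i) * S (prefix_chain xs ! i))
        = (\<Sum>i<length xs. (F i - F (Suc i)) * S (set (take (Suc i) xs)))"
    using assms(1) by (intro sum.cong) (simp_all add: chain_weight_set_take)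
  also have "\<dots> = (\<Sum>i<length xs. F i * marginal_gain S xs i)"
    using sum_lessThan_by_parts[of F "\<lambda>i. S (set (take i xs))" "length xs"] assms(2,3)
    by (simp add: marginal_gain_def)
  finally show ?thesis .
qed

theorem lemma31:
  fixes X :: "'a set" and S :: "'a set \<Rightarrow> real" and \<mu> :: "'a set \<Rightarrow> real"
  assumes "finite X"
    and "entropy_function X S"
    and "\<forall>A\<in>Pow X. \<mu> A \<ge> 0"
  shows "\<exists>As :: 'a set list. \<exists>\<mu>' :: 'a set \<Rightarrow> real.
           sorted_wrt (\<subset>) As \<and> (\<forall>A\<in>set As. A \<subseteq> X) \<and>
           (\<forall>A\<in>Pow X. \<mu>' A \<ge> 0) \<and>
           (\<forall>A\<in>Pow X. A \<notin> set As \<longrightarrow> \<mu>' A = 0) \<and>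
           (\<forall>x\<in>X. phi X \<mu>' x = phi X \<mu> x) \<and>
           (\<Sum>i<length As. \<mu>' (As ! i) * S (As ! i)) \<le> (\<Sum>A\<in>Pow X. \<mu> A * S A)"
proof -
  have S: "submodular_on X S" "S {} = 0"
    using assms(2) entropy_function_submodular_on unfolding entropy_function_def by auto
  obtain xs where xs: "distinct xs" "set xs = X" "sorted_wrt (\<lambda>x y. phi X \<mu> y \<le> phi X \<mu> x) xs"
    using finite_antitone_enumeration[OF assms(1)] by blast
  define F where "F i = (if i < length xs then phi X \<mu> (xs ! i) else 0)" for i
  define \<mu>' where "\<mu>' = chain_weight xs (\<lambda>i. F i - F (Suc i))"
  have "F i - F (Suc i) \<ge> 0" for i
    using xs(3) phi_nonneg[OF assms(1,3)] unfolding F_def sorted_wrt_iff_nth_less by auto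
  then have nonneg: "\<mu>' A \<ge> 0" for A
    unfolding \<mu>'_def by (rule chain_weight_nonneg)
  have F_end: "F (length xs) = 0" by (simp add: F_def)
  have "phi X \<mu>' (xs ! j) = phi X \<mu> (xs ! j)" if "j < length xs" for j
    using phi_chain_weight_telescope[where F = F, OF assms(1) _ xs(1) that F_end] xs(2) that
    unfolding \<mu>'_def by (simp add: F_def)
  then have phi: "\<forall>x\<in>X. phi X \<mu>' x = phi X \<mu> x"
    using xs(2) by (auto simp: in_set_conv_nth)
  have "(\<Sum>i<length xs. \<mu>' (prefix_chain xs ! i) * S (prefix_chain xs ! i))
        = (\<Sum>i<length xs. phi X \<mu> (xs ! i) * marginal_gain S xs i)"
    unfolding \<mu>'_def sum_chain_weight_telescope[where F = F and S = S, OF xs(1) S(2) F_end]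
    by (simp add: F_def)
  also have "\<dots> \<le> (\<Sum>A\<in>Pow X. \<mu> A * S A)"
    by (rule submodular_on_sum_phi_marginal_gain_le[OF assms(1) S xs(2) assms(3)])
  finally have cost: "(\<Sum>i<length xs. \<mu>' (prefix_chain xs ! i) * S (prefix_chain xs ! i))
                      \<le> (\<Sum>A\<in>Pow X. \<mu> A * S A)" .
  have support: "\<mu>' A = 0" if "A \<notin> set (prefix_chain xs)" for A
    unfolding \<mu>'_def using that by (rule chain_weight_eq_0)
  show ?thesis
    using sorted_wrt_psubset_prefix_chain[OF xs(1)] prefix_chain_subset[of _ xs] xs(2)
      nonneg support phi cost
    by (intro exI[of _ "prefix_chain xs"] exI[of _ \<mu>']) auto
qed

end
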